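(* Let $f:[0,1)\to\mathbb{R}$ be a function such that for every positive integer $n$, every real $t\in[0,n)$ and every $p\in[0,1]$, \[ \mathbb{E}\big[\exp(t\cdot V_{n,2,(p,1-p)})\big]\leq f(t/n). \] Let $k\geq 2$ be an integer, $n$ a positive integer, and $P=(p_1,\dots,p_k)$ a probability distribution on a set of size $k$. Then for all $0\leq t<n$, \[ \mathbb{E}\big[\exp(t\cdot V_{n,k,P})\big]\leq f(t/n)^{k-1}. \]
   Context: For a positive integer $n$, an integer $k\geq 2$ and a probability distribution $P=(p_1,\dots,p_k)$ on $\{1,\dots,k\}$, let $X=(X_1,\dots,X_k)$ be multinomially distributed with $n$ samples and probabilities $P$, and define $V_{n,k,P}=D\big((X_1/n,\dots,X_k/n)\,\|\,(p_1,\dots,p_k)\big)$, where $D\big((q_i)_i\,\|\,(p_i)_i\big)=\sum_i q_i\log\frac{q_i}{p_i}$ is the Kullback--Leibler divergence (natural logarithm, convention $0\log(0/p)=0$). In particular $V_{n,2,(p,1-p)}=D\big((B/n,1-B/n)\,\|\,(p,1-p)\big)$ with $B\sim\mathrm{Binom}(n,p)$. *)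

theory Defs
  imports "HOL-Probability.Probability"
begin

definition KL :: "nat \<Rightarrow> (nat \<Rightarrow> real) \<Rightarrow> (nat \<Rightarrow> real) \<Rightarrow> real" where
  "KL k q p = (\<Sum>i<k. if q i = 0 then 0 else q i * ln (q i / p i))"

definition count_vectors :: "nat \<Rightarrow> nat \<Rightarrow> (nat \<Rightarrow> nat) set" where
  "count_vectors n k = {x \<in> {..<k} \<rightarrow>\<^sub>E {..n}. (\<Sum>i<k. x i) = n}"

definition multinomial_expectation ::
  "nat \<Rightarrow> nat \<Rightarrow> (nat \<Rightarrow> real) \<Rightarrow> ((nat \<Rightarrow> nat) \<Rightarrow> real) \<Rightarrow> real" where
  "multinomial_expectation n k p g =
     (\<Sum>x\<in>count_vectors n k.
        (fact n / (\<Prod>i<k. fact (x i))) * (\<Prod>i<k. p i ^ x i) * g x)"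

definition V_multi :: "nat \<Rightarrow> nat \<Rightarrow> (nat \<Rightarrow> real) \<Rightarrow> (nat \<Rightarrow> nat) \<Rightarrow> real" where
  "V_multi n k p x = KL k (\<lambda>i. real (x i) / real n) p"

definition V_binom :: "nat \<Rightarrow> real \<Rightarrow> nat \<Rightarrow> real" where
  "V_binom n p b = KL 2 (\<lambda>i. if i = 0 then real b / real n else 1 - real b / real n)
                        (\<lambda>i. if i = 0 then p else 1 - p)"

end

theory Submission
  imports Defs
begin

text \<open>Chain rule for the divergence: splitting off the last category, a count vector x of
  n samples is a binomial count b = x k together with a count vector y of the remaining
  n - b samples, multinomial with the renormalised probabilities P i / (1 - P k), and
  n V(x) = n V_binom(b) + (n - b) V(y). Hence the moment generating function at
  parameter n c factorises as a binomial expectation of exp (n c V_binom) times the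
  same quantity for k categories at parameter (n - b) c, with the same ratio c < 1.
  Induction on k then gives the bound f(c)^(k-1); the base of the induction uses
  f(c) \<ge> 1, which is the hypothesis at p = 0.\<close>

lemma finite_count_vectors: "finite (count_vectors n k)"
proof -
  have "count_vectors n k \<subseteq> {..<k} \<rightarrow>\<^sub>E {..n}" unfolding count_vectors_def by auto
  thus ?thesis by (rule finite_subset) (simp add: finite_PiE)
qed

lemma count_vectors_0: "count_vectors 0 k = {\<lambda>i\<in>{..<k}. 0}"
  unfolding count_vectors_def by (auto simp: PiE_def extensional_def fun_eq_iff)

lemma count_vectors_1: "count_vectors n (Suc 0) = {\<lambda>i\<in>{..<Suc 0}. n}"
  unfolding count_vectors_def by (auto simp: PiE_def extensional_def fun_eq_iff)

lemma bij_betw_count_vectors_Suc: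
  "bij_betw (\<lambda>(b, y). y(k := b)) (SIGMA b:{..n}. count_vectors (n - b) k)
     (count_vectors n (Suc k))"
proof (rule bij_betw_byWitness[where f' = "\<lambda>x. (x k, x(k := undefined))"])
  have sum_upd: "(\<Sum>i<k. (x(k := a)) i) = (\<Sum>i<k. x i)" for x :: "nat \<Rightarrow> nat" and a
    by (rule sum.cong) auto
  show "(\<lambda>(b, y). y(k := b)) ` (SIGMA b:{..n}. count_vectors (n - b) k) \<subseteq> count_vectors n (Suc k)"
    by (auto simp: count_vectors_def PiE_def extensional_def Pi_def sum_upd less_Suc_eq)
  show "(\<lambda>x. (x k, x(k := undefined))) ` count_vectors n (Suc k)
          \<subseteq> (SIGMA b:{..n}. count_vectors (n - b) k)"
    by (auto simp: count_vectors_def PiE_def extensional_def Pi_def sum_upd intro: member_le_sum)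
qed (auto simp: count_vectors_def PiE_def extensional_def fun_eq_iff)

lemma expectation_binomial_pmf:
  assumes "0 \<le> p" "p \<le> 1"
  shows "measure_pmf.expectation (binomial_pmf n p) g = (\<Sum>b\<le>n. pmf (binomial_pmf n p) b * g b)"
proof -
  have "measure_pmf.expectation (binomial_pmf n p) g = (\<Sum>b\<le>n. g b * pmf (binomial_pmf n p) b)"
    by (rule integral_measure_pmf_real) (use assms in \<open>auto simp: set_pmf_binomial_eq split: if_splits\<close>)
  thus ?thesis by (simp add: mult.commute)
qed

lemma expectation_exp_V_binom_0:
  "measure_pmf.expectation (binomial_pmf n 0) (\<lambda>b. exp (s * V_binom n 0 b)) = 1"
proof -
  have "measure_pmf.expectation (binomial_pmf n 0) (\<lambda>b. exp (s * V_binom n 0 b))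
     = (\<Sum>b\<in>{0}. exp (s * V_binom n 0 b) * pmf (binomial_pmf n 0) b)"
    by (rule integral_measure_pmf_real) auto
  also have "\<dots> = 1" by (simp add: V_binom_def KL_def numeral_2_eq_2)
  finally show ?thesis .
qed

definition multinomial_weight :: "nat \<Rightarrow> nat \<Rightarrow> (nat \<Rightarrow> real) \<Rightarrow> (nat \<Rightarrow> nat) \<Rightarrow> real" where
  "multinomial_weight n k p x = fact n / (\<Prod>i<k. fact (x i)) * (\<Prod>i<k. p i ^ x i)"

lemma multinomial_expectation_eq:
  "multinomial_expectation n k p g = (\<Sum>x\<in>count_vectors n k. multinomial_weight n k p x * g x)"
  unfolding multinomial_expectation_def multinomial_weight_def by simp

lemma multinomial_weight_Suc:
  assumes b: "b \<le> n" and y: "y \<in> count_vectors (n - b) k"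
    and scale: "\<And>i. i < k \<Longrightarrow> P i = q * P' i"
  shows "multinomial_weight n (Suc k) P (y(k := b))
       = real (n choose b) * P k ^ b * q ^ (n - b) * multinomial_weight (n - b) k P' y"
proof -
  have sum_y: "(\<Sum>i<k. y i) = n - b" using y unfolding count_vectors_def by auto
  have "(\<Prod>i<k. P i ^ y i) = (\<Prod>i<k. q ^ y i * P' i ^ y i)"
    using scale by (intro prod.cong) (auto simp: power_mult_distrib)
  also have "\<dots> = q ^ (n - b) * (\<Prod>i<k. P' i ^ y i)"
    by (simp add: prod.distrib power_sum[symmetric] sum_y)
  finally have prod_P: "(\<Prod>i<k. P i ^ y i) = q ^ (n - b) * (\<Prod>i<k. P' i ^ y i)" .
  have "(\<Prod>i<k. fact (y i)) \<noteq> (0::real)" by simp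
  thus ?thesis
    unfolding multinomial_weight_def binomial_fact[OF b]
    by (simp add: prod.lessThan_Suc prod_P field_simps)
qed

lemma renormalise_last:
  fixes P :: "nat \<Rightarrow> real"
  assumes nonneg: "\<And>i. i < Suc k \<Longrightarrow> 0 \<le> P i" and sum: "(\<Sum>i<Suc k. P i) = 1" and "i < k"
  shows "P i = (1 - P k) * (P i / (1 - P k))"
proof (cases "P k = 1")
  case True
  then have "(\<Sum>i<k. P i) = 0" using sum by simp
  then have "P i = 0" using nonneg \<open>i < k\<close> by (subst (asm) sum_nonneg_eq_0_iff) auto
  thus ?thesis by simp
qed simp

lemma renormalise_last_distribution:
  fixes P :: "nat \<Rightarrow> real"
  assumes nonneg: "\<And>i. i < Suc k \<Longrightarrow> 0 \<le> P i" and sum: "(\<Sum>i<Suc k. P i) = 1" and "P k < 1"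
  shows "\<And>i. i < k \<Longrightarrow> 0 \<le> P i / (1 - P k)" and "(\<Sum>i<k. P i / (1 - P k)) = 1"
proof -
  show "\<And>i. i < k \<Longrightarrow> 0 \<le> P i / (1 - P k)" using nonneg \<open>P k < 1\<close> by simp
  have "(\<Sum>i<k. P i) = 1 - P k" using sum by simp
  thus "(\<Sum>i<k. P i / (1 - P k)) = 1" using \<open>P k < 1\<close> by (simp add: sum_divide_distrib[symmetric])
qed

definition kl_summand :: "real \<Rightarrow> real \<Rightarrow> real \<Rightarrow> real" where
  "kl_summand a N q = (if a = 0 then 0 else a * ln (a / N / q))"

lemma KL_scaled:
  assumes "0 < N"
  shows "N * KL k (\<lambda>i. a i / N) p = (\<Sum>i<k. kl_summand (a i) N (p i))"
  unfolding KL_def sum_distrib_left kl_summand_def by (rule sum.cong) (use assms in auto)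

lemma V_multi_scaled:
  assumes "0 < n"
  shows "real n * V_multi n k P x = (\<Sum>i<k. kl_summand (real (x i)) (real n) (P i))"
  unfolding V_multi_def using assms by (intro KL_scaled) auto

lemma V_binom_scaled:
  assumes "0 < n" "b \<le> n"
  shows "real n * V_binom n p b = kl_summand (real b) n p + kl_summand (real (n - b)) n (1 - p)"
proof -
  have "real n * V_binom n p b
      = real n * KL 2 (\<lambda>i. (if i = 0 then real b else real (n - b)) / real n)
                      (\<lambda>i. if i = 0 then p else 1 - p)"
    unfolding V_binom_def using assms
    by (intro arg_cong[where f = "\<lambda>q. real n * KL 2 q _"])
       (auto simp: fun_eq_iff of_nat_diff diff_divide_distrib)
  also have "\<dots> = (\<Sum>i<(2::nat). kl_summand (if i = 0 then real b else real (n - b)) n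
                                       (if i = 0 then p else 1 - p))"
    using assms by (subst KL_scaled) auto
  also have "\<dots> = kl_summand (real b) n p + kl_summand (real (n - b)) n (1 - p)"
    by (simp add: numeral_2_eq_2)
  finally show ?thesis .
qed

lemma kl_summand_rescale:
  assumes "0 \<le> a" "0 < N" "0 < M" "0 < q" and pos: "0 < a \<Longrightarrow> 0 < p"
  shows "kl_summand a N p = a * ln (M / N / q) + kl_summand a M (p / q)"
proof (cases "a = 0")
  case False
  with assms have "0 < a" "0 < p" by auto
  have "a / N / p = (a / M / (p / q)) * (M / N / q)"
    using assms \<open>0 < p\<close> by (simp add: field_simps)
  then have "ln (a / N / p) = ln (a / M / (p / q)) + ln (M / N / q)"
    using assms \<open>0 < a\<close> \<open>0 < p\<close> by (simp only: ln_mult_pos divide_pos_pos)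
  thus ?thesis using False by (simp add: kl_summand_def algebra_simps)
qed (simp add: kl_summand_def)

lemma V_multi_chain_rule:
  fixes P :: "nat \<Rightarrow> real"
  assumes nonneg: "\<And>i. i < Suc k \<Longrightarrow> 0 \<le> P i" and sum: "(\<Sum>i<Suc k. P i) = 1"
    and n: "0 < n" and b: "b \<le> n" and y: "y \<in> count_vectors (n - b) k"
    and supp: "\<And>i. i < k \<Longrightarrow> 0 < y i \<Longrightarrow> 0 < P i"
  shows "real n * V_multi n (Suc k) P (y(k := b))
       = real n * V_binom n (P k) b + real (n - b) * V_multi (n - b) k (\<lambda>i. P i / (1 - P k)) y"
proof -
  define q where "q = 1 - P k"
  have sum_y: "(\<Sum>i<k. y i) = n - b" using y unfolding count_vectors_def by auto
  have lhs: "real n * V_multi n (Suc k) P (y(k := b))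
           = (\<Sum>i<k. kl_summand (real (y i)) n (P i)) + kl_summand (real b) n (P k)"
    using n by (simp add: V_multi_scaled)
  have binom: "real n * V_binom n (P k) b = kl_summand (real b) n (P k) + kl_summand (real (n - b)) n q"
    using V_binom_scaled[OF n b] q_def by simp
  show ?thesis
  proof (cases "b = n")
    case True
    then have "y i = 0" if "i < k" for i using sum_y that by (simp add: sum_eq_0_iff)
    thus ?thesis using lhs binom True by (simp add: kl_summand_def)
  next
    case False
    then have nb: "0 < n - b" using b by simp
    obtain j where j: "j < k" "0 < y j"
    proof -
      have "(\<Sum>i<k. y i) \<noteq> 0" using sum_y nb by simp
      then show ?thesis using that by (metis gr0I sum.neutral lessThan_iff)
    qed
    have "P j \<le> (\<Sum>i<k. P i)" using j nonneg by (intro member_le_sum) auto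
    then have q: "0 < q" using supp[OF j] sum unfolding q_def by simp
    define K where "K = ln (real (n - b) / n / q)"
    have "(\<Sum>i<k. kl_summand (real (y i)) n (P i))
        = (\<Sum>i<k. real (y i) * K + kl_summand (real (y i)) (real (n - b)) (P i / q))"
      unfolding K_def using n nb q supp by (intro sum.cong refl kl_summand_rescale) auto
    also have "\<dots> = real (n - b) * K + (\<Sum>i<k. kl_summand (real (y i)) (real (n - b)) (P i / q))"
      by (simp add: sum.distrib flip: sum_distrib_right of_nat_sum sum_y)
    also have "real (n - b) * K = kl_summand (real (n - b)) n q"
      unfolding K_def kl_summand_def using nb by simp
    finally show ?thesis
      using lhs binom V_multi_scaled[OF nb] unfolding q_def by simp
  qed
qed

definition V_multi_mgf :: "nat \<Rightarrow> nat \<Rightarrow> (nat \<Rightarrow> real) \<Rightarrow> real \<Rightarrow> real" where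
  "V_multi_mgf n k P c = multinomial_expectation n k P (\<lambda>x. exp (real n * c * V_multi n k P x))"

lemma V_multi_mgf_0: "V_multi_mgf 0 k P c = 1"
  unfolding V_multi_mgf_def multinomial_expectation_eq count_vectors_0 multinomial_weight_def
  by simp

lemma V_multi_mgf_1: "P 0 = 1 \<Longrightarrow> V_multi_mgf n (Suc 0) P c = 1"
  unfolding V_multi_mgf_def multinomial_expectation_eq count_vectors_1 multinomial_weight_def
  by (cases "n = 0") (simp_all add: V_multi_def KL_def)

text \<open>No hypothesis P k < 1 is needed: if P k = 1 the renormalised probabilities are
  junk (division by zero), but every term with b < n then has binomial weight 0.\<close>

lemma V_multi_mgf_Suc:
  fixes P :: "nat \<Rightarrow> real"
  assumes nonneg: "\<And>i. i < Suc k \<Longrightarrow> 0 \<le> P i" and sum: "(\<Sum>i<Suc k. P i) = 1" and n: "0 < n"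
  shows "V_multi_mgf n (Suc k) P c
       = (\<Sum>b\<le>n. pmf (binomial_pmf n (P k)) b * exp (real n * c * V_binom n (P k) b)
                  * V_multi_mgf (n - b) k (\<lambda>i. P i / (1 - P k)) c)"
proof -
  define P' where "P' = (\<lambda>i. P i / (1 - P k))"
  define summand where "summand = (\<lambda>n k P x. multinomial_weight n k P x * exp (real n * c * V_multi n k P x))"
  have "P k \<le> (\<Sum>i<Suc k. P i)" using nonneg by (intro member_le_sum) auto
  then have p: "0 \<le> P k" "P k \<le> 1" using nonneg sum by auto
  have summand_split: "summand n (Suc k) P (y(k := b))
      = pmf (binomial_pmf n (P k)) b * exp (real n * c * V_binom n (P k) b) * summand (n - b) k P' y"
    if b: "b \<le> n" and y: "y \<in> count_vectors (n - b) k" for b y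
  proof -
    have weight: "multinomial_weight n (Suc k) P (y(k := b))
        = pmf (binomial_pmf n (P k)) b * multinomial_weight (n - b) k P' y"
      using multinomial_weight_Suc[OF b y renormalise_last[OF nonneg sum]] p
      unfolding P'_def by simp
    show ?thesis
    proof (cases "multinomial_weight n (Suc k) P (y(k := b)) = 0")
      case True
      with weight show ?thesis unfolding summand_def by simp
    next
      case False
      then have "0 < P i" if "i < k" "0 < y i" for i
        using that nonneg[of i] by (auto simp: multinomial_weight_def prod.lessThan_Suc order_le_less)
      then have "real n * V_multi n (Suc k) P (y(k := b))
               = real n * V_binom n (P k) b + real (n - b) * V_multi (n - b) k P' y"
        unfolding P'_def by (intro V_multi_chain_rule[OF nonneg sum n b y])
      then have "exp (real n * c * V_multi n (Suc k) P (y(k := b)))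
               = exp (real n * c * V_binom n (P k) b) * exp (real (n - b) * c * V_multi (n - b) k P' y)"
        by (simp add: algebra_simps flip: exp_add)
      then show ?thesis using weight unfolding summand_def by simp
    qed
  qed
  have mgf_eq: "V_multi_mgf m l Q c = (\<Sum>x\<in>count_vectors m l. summand m l Q x)" for m l Q
    unfolding V_multi_mgf_def multinomial_expectation_eq summand_def ..
  have "V_multi_mgf n (Suc k) P c = (\<Sum>(b, y)\<in>(SIGMA b:{..n}. count_vectors (n - b) k). summand n (Suc k) P (y(k := b)))"
    unfolding mgf_eq
    by (subst sum.reindex_bij_betw[OF bij_betw_count_vectors_Suc, symmetric]) (simp add: case_prod_unfold)
  also have "\<dots> = (\<Sum>b\<le>n. \<Sum>y\<in>count_vectors (n - b) k. summand n (Suc k) P (y(k := b)))"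
    by (subst sum.Sigma) (auto simp: finite_count_vectors)
  also have "\<dots> = (\<Sum>b\<le>n. pmf (binomial_pmf n (P k)) b * exp (real n * c * V_binom n (P k) b)
                            * V_multi_mgf (n - b) k P' c)"
    unfolding mgf_eq sum_distrib_left by (intro sum.cong refl) (simp add: summand_split)
  finally show ?thesis unfolding P'_def .
qed

lemma V_multi_mgf_le_power:
  fixes F c :: real
  assumes binomial_bound: "\<And>m p. 0 < m \<Longrightarrow> 0 \<le> p \<Longrightarrow> p \<le> 1 \<Longrightarrow>
      measure_pmf.expectation (binomial_pmf m p) (\<lambda>b. exp (real m * c * V_binom m p b)) \<le> F"
    and F: "1 \<le> F"
  shows "(\<And>i. i < Suc k \<Longrightarrow> 0 \<le> P i) \<Longrightarrow> (\<Sum>i<Suc k. P i) = 1 \<Longrightarrow> V_multi_mgf n (Suc k) P c \<le> F ^ k"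
proof (induction k arbitrary: n P)
  case 0
  then show ?case by (simp add: V_multi_mgf_1)
next
  case (Suc k)
  define p where "p = P (Suc k)"
  define P' where "P' = (\<lambda>i. P i / (1 - p))"
  define e where "e = (\<lambda>b. pmf (binomial_pmf n p) b * exp (real n * c * V_binom n p b))"
  have Fk: "1 \<le> F ^ k" using F by (rule one_le_power)
  have "p \<le> (\<Sum>i<Suc (Suc k). P i)" unfolding p_def using Suc.prems by (intro member_le_sum) auto
  then have p: "0 \<le> p" "p \<le> 1" using Suc.prems unfolding p_def by auto
  show ?case
  proof (cases "n = 0")
    case True
    then show ?thesis using one_le_power[OF F, of "Suc k"] by (simp add: V_multi_mgf_0 del: power_Suc)
  next
    case False
    have IH: "V_multi_mgf (n - b) (Suc k) P' c \<le> F ^ k" if "e b \<noteq> 0" for b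
    proof (cases "b = n")
      case True
      then show ?thesis using Fk by (simp add: V_multi_mgf_0)
    next
      case False
      then have "P (Suc k) < 1" using \<open>e b \<noteq> 0\<close> p by (auto simp: e_def p_def pmf_binomial)
      then show ?thesis
        unfolding P'_def p_def
        by (intro Suc.IH renormalise_last_distribution[OF Suc.prems]) auto
    qed
    have "V_multi_mgf n (Suc (Suc k)) P c = (\<Sum>b\<le>n. e b * V_multi_mgf (n - b) (Suc k) P' c)"
      using V_multi_mgf_Suc[OF Suc.prems] \<open>n \<noteq> 0\<close> unfolding e_def p_def P'_def by simp
    also have "\<dots> \<le> (\<Sum>b\<le>n. e b * F ^ k)"
    proof (intro sum_mono)
      fix b
      have "0 \<le> e b" unfolding e_def by simp
      then show "e b * V_multi_mgf (n - b) (Suc k) P' c \<le> e b * F ^ k"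
        using IH[of b] by (cases "e b = 0") (auto intro: mult_left_mono)
    qed
    also have "\<dots> = F ^ k * measure_pmf.expectation (binomial_pmf n p) (\<lambda>b. exp (real n * c * V_binom n p b))"
      unfolding expectation_binomial_pmf[OF p] e_def sum_distrib_left by (simp add: mult_ac)
    also have "\<dots> \<le> F ^ k * F"
      using binomial_bound[of n p] \<open>n \<noteq> 0\<close> p Fk by (intro mult_left_mono) auto
    finally show ?thesis by (simp add: mult.commute)
  qed
qed

theorem proposition2p3:
  fixes f :: "real \<Rightarrow> real" and k n :: nat and P :: "nat \<Rightarrow> real" and t :: real
  assumes hf: "\<And>(m::nat) (s::real) (p::real). m > 0 \<Longrightarrow> 0 \<le> s \<Longrightarrow> s < real m \<Longrightarrow>
              0 \<le> p \<Longrightarrow> p \<le> 1 \<Longrightarrow>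
              measure_pmf.expectation (binomial_pmf m p) (\<lambda>b. exp (s * V_binom m p b))
                \<le> f (s / real m)"
    and hk: "k \<ge> 2"
    and hn: "n > 0"
    and hP: "\<And>i. i < k \<Longrightarrow> P i \<ge> 0"
    and hPsum: "(\<Sum>i<k. P i) = 1"
    and ht: "0 \<le> t" "t < real n"
  shows "multinomial_expectation n k P (\<lambda>x. exp (t * V_multi n k P x)) \<le> f (t / real n) ^ (k - 1)"
proof -
  define c where "c = t / real n"
  have c: "0 \<le> c" "c < 1" unfolding c_def using ht hn by auto
  have binomial_bound:
    "measure_pmf.expectation (binomial_pmf m p) (\<lambda>b. exp (real m * c * V_binom m p b)) \<le> f c"
    if "0 < m" "0 \<le> p" "p \<le> 1" for m p
    using hf[of m "real m * c" p] that c by simp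
  have "1 \<le> f c"
    using binomial_bound[OF hn, of 0] expectation_exp_V_binom_0 by simp
  obtain j where k: "k = Suc j" using hk by (cases k) auto
  have "V_multi_mgf n (Suc j) P c \<le> f c ^ j"
    using V_multi_mgf_le_power[OF binomial_bound \<open>1 \<le> f c\<close>] hP hPsum unfolding k by blast
  moreover have "real n * c = t" unfolding c_def using hn by simp
  ultimately show ?thesis unfolding V_multi_mgf_def k c_def by simp
qed

end
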